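(* Let $n\ge 1$, $k>0$, and let $P\in\mathscr P_n$ have no zero in the disk $|z|<k$. Let $Q(z)=z^n\overline{P(1/\overline{z})}$. Then for all $\alpha,\beta\in\mathbb C$ with $|\alpha|\le1$, $|\beta|\le1$, all $R>r\ge k$ and all $|z|\ge1$, $$\big|B[P\circ\sigma](z)+\Phi_k(R,r,\alpha,\beta)B[P\circ\rho](z)\big|\le k^n\big|B[Q\circ\tau](z)+\Phi_k(R,r,\alpha,\beta)B[Q\circ\eta](z)\big|.$$
   Context: For an integer $n\ge1$, $\mathscr P_n$ denotes the set of complex polynomials of degree at most $n$. Fix complex numbers $\lambda_0,\lambda_1,\lambda_2$ such that all zeros of $U(z)=\lambda_0+n\lambda_1 z+\frac{n(n-1)}{2}\lambda_2 z^2$ lie in the half-plane $\{z\in\mathbb C:|z|\le|z-n/2|\}$. The operator $B$ (of the class $\mathcal B_n$) sends $P\in\mathscr P_n$ to $B[P](z)=\lambda_0P(z)+\lambda_1\frac{nz}{2}P'(z)+\lambda_2\left(\frac{nz}{2}\right)^2\frac{P''(z)}{2!}$. For a polynomial $P$ and a map $\rho$, $P\circ\rho$ denotes $z\mapsto P(\rho(z))$, and $B[P\circ\rho](z)$ is $B$ applied to the polynomial $P\circ\rho$, evaluated at $z$. For $k>0$, $R,r>0$ and $\alpha,\beta\in\mathbb C$: $\Phi_k(R,r,\alpha,\beta)=\beta\left\{\left(\frac{R+k}{k+r}\right)^n-|\alpha|\right\}-\alpha$; and $\sigma(z)=Rz$, $\rho(z)=rz$, $\tau(z)=Rz/k^2$,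 $\eta(z)=rz/k^2$. *)

theory Defs
  imports "HOL-Analysis.Analysis" "HOL-Computational_Algebra.Polynomial"
begin

definition Bop :: "nat \<Rightarrow> complex \<Rightarrow> complex \<Rightarrow> complex \<Rightarrow> complex poly \<Rightarrow> complex \<Rightarrow> complex" where
  "Bop n l0 l1 l2 P z =
     l0 * poly P z
     + l1 * (of_nat n * z / 2) * poly (pderiv P) z
     + l2 * (of_nat n * z / 2)^2 * poly (pderiv (pderiv P)) z / 2"

text \<open>The polynomial Q(z) = z^n conj(P(1/conj z)), written out coefficientwise:
  for P = sum a_j z^j (degree at most n), Q = sum conj(a_{n-j}) z^j.\<close>
definition reflQ :: "nat \<Rightarrow> complex poly \<Rightarrow> complex poly" where
  "reflQ n P = (\<Sum>j\<le>n. monom (cnj (coeff P (n - j))) j)"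

definition Phi :: "nat \<Rightarrow> real \<Rightarrow> real \<Rightarrow> real \<Rightarrow> complex \<Rightarrow> complex \<Rightarrow> complex" where
  "Phi n k R r \<alpha> \<beta> = \<beta> * of_real (((R + k) / (k + r)) ^ n - cmod \<alpha>) - \<alpha>"

definition scale :: "complex poly \<Rightarrow> real \<Rightarrow> complex poly" where
  "scale P c = pcompose P [:0, of_real c:]"

lemma reflQ_eval:
  assumes "degree P \<le> n" "z \<noteq> 0"
  shows "poly (reflQ n P) z = z ^ n * cnj (poly P (1 / cnj z))"
proof -
  have "poly (reflQ n P) z = (\<Sum>j\<le>n. cnj (coeff P (n - j)) * z ^ j)"
    by (simp add: reflQ_def poly_sum poly_monom)
  also have "\<dots> = (\<Sum>j\<le>n. cnj (coeff P j) * z ^ (n - j))"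
    by (rule sum.reindex_bij_witness[where i="\<lambda>j. n - j" and j="\<lambda>j. n - j"]) auto
  also have "\<dots> = z ^ n * (\<Sum>j\<le>n. cnj (coeff P j) * (1 / z) ^ j)"
    unfolding sum_distrib_left
    by (rule sum.cong) (use assms in \<open>auto simp: power_diff field_simps power_one_over\<close>)
  also have "(\<Sum>j\<le>n. cnj (coeff P j) * (1 / z) ^ j) = cnj (poly P (1 / cnj z))"
  proof -
    have "(\<Sum>j\<le>n. cnj (coeff P j) * (1 / z) ^ j) = (\<Sum>j\<le>degree P. cnj (coeff P j) * (1 / z) ^ j)"
      using assms(1) by (intro sum.mono_neutral_right) (auto simp: coeff_eq_0)
    thus ?thesis by (simp add: poly_altdef atMost_atLeast0 complex_cnj_divide)
  qed
  finally show ?thesis .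
qed

end

theory Submission
  imports Defs "HOL-Computational_Algebra.Fundamental_Theorem_Algebra"
begin

text \<open>Let F have degree n and all zeros in |w| < k, and let |\<Phi>| \<le> ((R + k)/(k + r))^n.
  Comparing the factors of F(Rw) and F(rw) shows that H = F\<circ>\<sigma> + \<Phi> F\<circ>\<rho> has all its zeros in the open
  unit disk. The hypothesis on U says exactly that B[(X - u)^n](z) \<noteq> 0 for |u| < |z|, and Laguerre's
  theorem on polar derivatives propagates this, a Walsh-type coincidence argument, to every product of
  n linear factors with roots in a smaller disk; hence B[H](z) \<noteq> 0 for |z| \<ge> 1.
  If P has no zeros in |w| \<le> k, the reflection G(w) = k^n Q(w/k^2) has no zeros in |w| \<ge> k and
  dominates P there. Were the left-hand side X larger than the right-hand side Y in modulus, then with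
  \<mu> = X/Y the polynomial P - \<mu> G would have degree n and all zeros in |w| < k, while its combination
  B[.\<circ>\<sigma>] + \<Phi> B[.\<circ>\<rho>] equals X - \<mu> Y = 0, a contradiction. The open-disk hypothesis is reached by working
  at radii below k and letting the radius tend to k.\<close>

section \<open>Laguerre's theorem on polar derivatives\<close>

text \<open>\<open>laguerre_form u \<rho> (1 / (u - z))\<close> is positive exactly when \<open>\<rho> < cmod z\<close>, and for
  \<open>cmod u \<le> \<rho>\<close> the form is concave in \<open>t\<close>. The logarithmic derivative \<open>\<phi>'(u) / (N \<phi>(u))\<close>
  is a convex combination of the values \<open>1 / (u - z\<^sub>i)\<close> at the zeros and of \<open>0\<close>, so it keeps the form
  positive; this is Laguerre's theorem.\<close>
definition laguerre_form :: "complex \<Rightarrow> real \<Rightarrow> complex \<Rightarrow> real" where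
  "laguerre_form u \<rho> t = 1 - 2 * Re (u * t) + ((cmod u)\<^sup>2 - \<rho>\<^sup>2) * (cmod t)\<^sup>2"

lemma laguerre_form_inverse:
  assumes "x \<noteq> 0"
  shows "laguerre_form u \<rho> (1 / x) * (cmod x)\<^sup>2 = (cmod (u - x))\<^sup>2 - \<rho>\<^sup>2"
proof -
  have "1 / x = cnj x / of_real ((cmod x)\<^sup>2)"
    using assms by (simp add: complex_div_cnj[of 1 x])
  then have "Re (u * (1 / x)) * (cmod x)\<^sup>2 = Re (u * cnj x)"
    using assms by (simp add: Re_divide_of_real)
  moreover have "(cmod (1 / x))\<^sup>2 * (cmod x)\<^sup>2 = 1"
    using assms by (simp add: norm_divide field_simps)
  moreover have "(cmod (u - x))\<^sup>2 = (cmod u)\<^sup>2 - 2 * Re (u * cnj x) + (cmod x)\<^sup>2"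
    unfolding cmod_power2 by (simp add: power2_eq_square algebra_simps)
  ultimately show ?thesis
    unfolding laguerre_form_def by (simp add: algebra_simps)
qed

lemma laguerre_form_inverse_pos_iff:
  assumes "u \<noteq> z" "0 \<le> \<rho>"
  shows "0 < laguerre_form u \<rho> (1 / (u - z)) \<longleftrightarrow> \<rho> < cmod z"
proof -
  have E: "laguerre_form u \<rho> (1 / (u - z)) * (cmod (u - z))\<^sup>2 = (cmod z)\<^sup>2 - \<rho>\<^sup>2"
    using laguerre_form_inverse[of "u - z" u \<rho>] assms(1) by simp
  have "0 < (cmod (u - z))\<^sup>2"
    using assms by simp
  then have "0 < laguerre_form u \<rho> (1 / (u - z)) \<longleftrightarrow> 0 < laguerre_form u \<rho> (1 / (u - z)) * (cmod (u - z))\<^sup>2"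
    by (simp add: zero_less_mult_iff)
  also have "\<dots> \<longleftrightarrow> \<rho>\<^sup>2 < (cmod z)\<^sup>2"
    unfolding E by simp
  also have "\<dots> \<longleftrightarrow> \<rho> < cmod z"
    using power_mono_iff[of "cmod z" \<rho> 2] assms(2) by (simp add: not_le[symmetric])
  finally show ?thesis .
qed

lemma laguerre_form_convex_comb_pos:
  assumes "0 \<le> \<theta>" "\<theta> \<le> 1" "cmod u \<le> \<rho>"
    and "0 < laguerre_form u \<rho> t1" "0 < laguerre_form u \<rho> t2"
  shows "0 < laguerre_form u \<rho> (of_real \<theta> * t1 + of_real (1 - \<theta>) * t2)"
proof -
  let ?f = "laguerre_form u \<rho>" and ?t = "of_real \<theta> * t1 + of_real (1 - \<theta>) * t2"
  have Re_lin: "Re (u * ?t) = \<theta> * Re (u * t1) + (1 - \<theta>) * Re (u * t2)"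
    by (simp add: algebra_simps)
  have split: "?f ?t = \<theta> * ?f t1 + (1 - \<theta>) * ?f t2
      + (\<rho>\<^sup>2 - (cmod u)\<^sup>2) * (\<theta> * (cmod t1)\<^sup>2 + (1 - \<theta>) * (cmod t2)\<^sup>2 - (cmod ?t)\<^sup>2)"
    unfolding laguerre_form_def Re_lin by (simp add: algebra_simps)
  have gap: "\<theta> * (cmod t1)\<^sup>2 + (1 - \<theta>) * (cmod t2)\<^sup>2 - (cmod ?t)\<^sup>2 = \<theta> * (1 - \<theta>) * (cmod (t1 - t2))\<^sup>2"
    unfolding cmod_power2 by (simp add: power2_eq_square algebra_simps)
  have "0 \<le> (\<rho>\<^sup>2 - (cmod u)\<^sup>2) * (\<theta> * (1 - \<theta>) * (cmod (t1 - t2))\<^sup>2)"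
    using assms(1-3) by (simp add: power_mono)
  moreover have "0 < \<theta> * ?f t1 + (1 - \<theta>) * ?f t2"
  proof (cases "\<theta> = 1")
    case False
    then have "0 < (1 - \<theta>) * ?f t2"
      using assms(2,5) by simp
    moreover have "0 \<le> \<theta> * ?f t1"
      using assms(1,4) by simp
    ultimately show ?thesis by linarith
  qed (use assms(4) in simp)
  ultimately show ?thesis
    unfolding split gap by linarith
qed

lemma logderiv_linear_factor:
  fixes \<psi> :: "complex poly"
  assumes "1 \<le> N" "degree \<psi> \<le> N - 1" "u \<noteq> z" "poly \<psi> u \<noteq> 0"
  shows "poly (pderiv ([:-z, 1:] * \<psi>)) u / (of_nat N * poly ([:-z, 1:] * \<psi>) u)
    = of_real (1 / real N) * (1 / (u - z))
      + of_real (1 - 1 / real N) * (poly (pderiv \<psi>) u / (of_nat (N - 1) * poly \<psi> u))"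
proof -
  have "of_real (1 - 1 / real N) * (poly (pderiv \<psi>) u / (of_nat (N - 1) * poly \<psi> u))
      = poly (pderiv \<psi>) u / (of_nat N * poly \<psi> u)"
  proof (cases "N = 1")
    case True
    then have "pderiv \<psi> = 0"
      using assms(2) by (simp add: pderiv_eq_0_iff)
    then show ?thesis by simp
  next
    case False
    then show ?thesis
      using assms(1,4) by (simp add: of_nat_diff field_simps)
  qed
  moreover have "poly (pderiv ([:-z, 1:] * \<psi>)) u = poly \<psi> u + (u - z) * poly (pderiv \<psi>) u"
    unfolding pderiv_mult by (simp add: pderiv_pCons algebra_simps)
  moreover have "poly ([:-z, 1:] * \<psi>) u = (u - z) * poly \<psi> u"
    by (simp add: algebra_simps)
  ultimately show ?thesis
    using assms(1,3,4) by (simp add: add_divide_distrib)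
qed

text \<open>\<open>N = 0\<close> is admitted (the quotient is then \<open>0\<close>, as \<open>x / 0 = 0\<close>), so the induction step
  may pass to \<open>N - 1\<close> without a side condition.\<close>
lemma laguerre_form_logderiv_pos:
  fixes \<phi> :: "complex poly"
  assumes "degree \<phi> \<le> N" "\<forall>w. cmod w \<le> \<rho> \<longrightarrow> poly \<phi> w \<noteq> 0" "cmod u \<le> \<rho>"
  shows "0 < laguerre_form u \<rho> (poly (pderiv \<phi>) u / (of_nat N * poly \<phi> u))"
  using assms
proof (induction "degree \<phi>" arbitrary: \<phi> N)
  case 0
  then have "pderiv \<phi> = 0"
    by (simp add: pderiv_eq_0_iff)
  then show ?case
    by (simp add: laguerre_form_def)
next
  case (Suc d)
  have "\<not> constant (poly \<phi>)"
    using Suc.hyps(2) by (simp add: constant_degree)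
  then obtain z where "poly \<phi> z = 0"
    using fundamental_theorem_of_algebra by blast
  then obtain \<psi> where \<phi>: "\<phi> = [:-z, 1:] * \<psi>"
    by (metis dvdE poly_eq_0_iff_dvd)
  have "\<psi> \<noteq> 0"
    using Suc.hyps(2) \<phi> by auto
  then have \<psi>: "degree \<psi> = d" "\<forall>w. cmod w \<le> \<rho> \<longrightarrow> poly \<psi> w \<noteq> 0"
    using Suc.hyps(2) Suc.prems(2) unfolding \<phi> by (subst (asm) degree_mult_eq; auto)+
  have "\<rho> < cmod z"
    using Suc.prems(2) \<open>poly \<phi> z = 0\<close> by (meson not_le)
  then have z: "u \<noteq> z" "0 \<le> \<rho>" "poly \<psi> u \<noteq> 0"
    using Suc.prems(3) \<psi>(2) order_trans[OF norm_ge_zero Suc.prems(3)] by auto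
  have N: "1 \<le> N" "d \<le> N - 1"
    using Suc.hyps(2) Suc.prems(1) by auto
  have "0 < laguerre_form u \<rho> (1 / (u - z))"
    using laguerre_form_inverse_pos_iff z(1,2) \<open>\<rho> < cmod z\<close> by simp
  moreover have "0 < laguerre_form u \<rho> (poly (pderiv \<psi>) u / (of_nat (N - 1) * poly \<psi> u))"
    using Suc.hyps(1) \<psi> N(2) Suc.prems(3) by simp
  moreover have "0 \<le> 1 / real N" "1 / real N \<le> 1"
    using N(1) by auto
  ultimately show ?case
    unfolding \<phi> logderiv_linear_factor[OF N(1) N(2)[folded \<psi>(1)] z(1,3)]
    using laguerre_form_convex_comb_pos Suc.prems(3) by blast
qed

theorem laguerre_polar_nonzero:
  fixes \<phi> :: "complex poly"
  assumes "degree \<phi> \<le> N" "1 \<le> N" "\<forall>w. cmod w \<le> \<rho> \<longrightarrow> poly \<phi> w \<noteq> 0"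
    and "cmod u \<le> \<rho>" "cmod a \<le> \<rho>"
  shows "of_nat N * poly \<phi> u + (a - u) * poly (pderiv \<phi>) u \<noteq> 0"
proof
  assume eq: "of_nat N * poly \<phi> u + (a - u) * poly (pderiv \<phi>) u = 0"
  have "poly \<phi> u \<noteq> 0"
    using assms(3,4) by blast
  then have "u \<noteq> a"
    using eq assms(2) by auto
  have "poly (pderiv \<phi>) u / (of_nat N * poly \<phi> u) = 1 / (u - a)"
    using eq assms(2) \<open>poly \<phi> u \<noteq> 0\<close> \<open>u \<noteq> a\<close> by (auto simp: field_simps)
  then have "0 < laguerre_form u \<rho> (1 / (u - a))"
    using laguerre_form_logderiv_pos[OF assms(1,3,4)] by simp
  then have "\<rho> < cmod a"
    using laguerre_form_inverse_pos_iff[OF \<open>u \<noteq> a\<close>] order_trans[OF norm_ge_zero assms(4)] by simp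
  then show False
    using assms(5) by simp
qed

section \<open>A Walsh-type principle for second-order functionals\<close>

definition diff2_functional :: "complex \<Rightarrow> complex \<Rightarrow> complex \<Rightarrow> complex \<Rightarrow> complex poly \<Rightarrow> complex" where
  "diff2_functional z a b c F = a * poly F z + b * poly (pderiv F) z + c * poly (pderiv (pderiv F)) z"

lemma diff2_functional_add:
  "diff2_functional z a b c (F + G) = diff2_functional z a b c F + diff2_functional z a b c G"
  by (simp add: diff2_functional_def pderiv_add algebra_simps)

lemma diff2_functional_smult:
  "diff2_functional z a b c (smult s F) = s * diff2_functional z a b c F"
  by (simp add: diff2_functional_def pderiv_smult algebra_simps)

lemma diff2_functional_linear_factor:
  "diff2_functional z a b c ([:-w, 1:] * G)
     = diff2_functional z (a * (z - w) + b) (b * (z - w) + 2 * c) (c * (z - w)) G"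
proof -
  have d1: "pderiv ([:-w, 1:] * H) = H + [:-w, 1:] * pderiv H" for H
    unfolding pderiv_mult by (simp add: pderiv_pCons)
  show ?thesis
    by (simp only: diff2_functional_def d1 pderiv_add) (simp add: algebra_simps)
qed

definition diff2_symbol :: "complex \<Rightarrow> nat \<Rightarrow> complex \<Rightarrow> complex \<Rightarrow> complex \<Rightarrow> complex poly" where
  "diff2_symbol z N a b c = smult a ([:z, -1:] ^ N) + smult (b * of_nat N) ([:z, -1:] ^ (N - 1))
     + smult (c * of_nat (N * (N - 1))) ([:z, -1:] ^ (N - 2))"

lemma pderiv_linear_power:
  "pderiv ([:a, b:] ^ N) = smult (of_nat N * b) ([:a, b:] ^ (N - 1))"
proof (cases N)
  case (Suc m)
  show ?thesis
    unfolding Suc pderiv_power_Suc by (simp add: pderiv_pCons mult.commute)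
qed simp

lemma poly_diff2_symbol:
  "poly (diff2_symbol z N a b c) u = diff2_functional z a b c ([:-u, 1:] ^ N)"
  unfolding diff2_symbol_def diff2_functional_def pderiv_linear_power pderiv_smult
  by (cases N) (simp_all add: algebra_simps)

lemma degree_diff2_symbol: "degree (diff2_symbol z N a b c) \<le> N"
proof -
  have "degree ([:z, -1:] ^ m) \<le> m" for m :: nat
    using degree_power_le[of "[:z, -1:]" m] by simp
  then show ?thesis
    unfolding diff2_symbol_def
    by (intro degree_add_le order.trans[OF degree_smult_le]) (auto intro: le_trans[of _ "N - 1"] le_trans[of _ "N - 2"])
qed

lemma poly_pderiv_diff2_symbol:
  "poly (pderiv (diff2_symbol z (Suc N) a b c)) u = - of_nat (Suc N) * poly (diff2_symbol z N a b c) u"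
proof (cases N)
  case (Suc m)
  then show ?thesis
    unfolding diff2_symbol_def pderiv_add pderiv_smult pderiv_linear_power
    by (cases m) (simp_all add: algebra_simps)
qed (simp add: diff2_symbol_def pderiv_pCons)

lemma poly_diff2_symbol_shift:
  "poly (diff2_symbol z N (a * (z - w) + b) (b * (z - w) + 2 * c) (c * (z - w))) u
     = poly (diff2_symbol z (Suc N) a b c) u + (u - w) * poly (diff2_symbol z N a b c) u"
proof -
  have "[:-w, 1:] = [:-u, 1:] + [:u - w:]"
    by simp
  then have "[:-w, 1:] * [:-u, 1:] ^ N = [:-u, 1:] ^ Suc N + smult (u - w) ([:-u, 1:] ^ N)"
    by (simp only: distrib_right power_Suc) simp
  then show ?thesis
    by (simp only: poly_diff2_symbol flip: diff2_functional_linear_factor)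
      (simp only: diff2_functional_add diff2_functional_smult)
qed

text \<open>The roots are peeled off one at a time: absorbing a factor \<open>X - w\<close> gives a functional of
  the same shape, whose symbol stays nonzero on the disk by Laguerre's theorem applied to the old symbol.\<close>
theorem diff2_functional_prod_nonzero:
  assumes "0 \<le> \<rho>" "\<forall>x\<in>#M. cmod x \<le> \<rho>"
    and "\<forall>u. cmod u \<le> \<rho> \<longrightarrow> poly (diff2_symbol z (size M) a b c) u \<noteq> 0"
  shows "diff2_functional z a b c (\<Prod>x\<in>#M. [:-x, 1:]) \<noteq> 0"
  using assms(2,3)
proof (induction M arbitrary: a b c)
  case empty
  then have "poly (diff2_symbol z 0 a b c) 0 \<noteq> 0"
    using assms(1) by simp
  then show ?case
    by (simp add: poly_diff2_symbol)
next
  case (add w M)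
  let ?N = "size M"
  have "poly (diff2_symbol z ?N (a * (z - w) + b) (b * (z - w) + 2 * c) (c * (z - w))) u \<noteq> 0"
    if u: "cmod u \<le> \<rho>" for u
  proof -
    have "of_nat (Suc ?N) * poly (diff2_symbol z (Suc ?N) a b c) u
        + (w - u) * poly (pderiv (diff2_symbol z (Suc ?N) a b c)) u \<noteq> 0"
      using add.prems by (intro laguerre_polar_nonzero[OF degree_diff2_symbol _ _ u]) auto
    then have "of_nat (Suc ?N) * (poly (diff2_symbol z (Suc ?N) a b c) u
        + (u - w) * poly (diff2_symbol z ?N a b c) u) \<noteq> 0"
      unfolding poly_pderiv_diff2_symbol by (simp add: algebra_simps)
    then show ?thesis
      unfolding poly_diff2_symbol_shift by simp
  qed
  then have "diff2_functional z (a * (z - w) + b) (b * (z - w) + 2 * c) (c * (z - w))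
      (\<Prod>x\<in>#M. [:-x, 1:]) \<noteq> 0"
    using add.IH add.prems(1) by simp
  then show ?case
    by (simp only: prod_mset.add_mset image_mset_add_mset diff2_functional_linear_factor not_False_eq_True)
qed

section \<open>The operator B and its zeros\<close>

definition Bop_U :: "nat \<Rightarrow> complex \<Rightarrow> complex \<Rightarrow> complex \<Rightarrow> complex \<Rightarrow> complex" where
  "Bop_U n l0 l1 l2 w = l0 + of_nat n * l1 * w + of_nat n * (of_nat n - 1) / 2 * l2 * w ^ 2"

lemma Bop_eq_diff2_functional:
  "Bop n l0 l1 l2 H z = diff2_functional z l0 (l1 * (of_nat n * z / 2)) (l2 * (of_nat n * z / 2)\<^sup>2 / 2) H"
  by (simp add: Bop_def diff2_functional_def)

lemma Bop_add: "Bop n l0 l1 l2 (F + G) z = Bop n l0 l1 l2 F z + Bop n l0 l1 l2 G z"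
  by (simp add: Bop_eq_diff2_functional diff2_functional_add)

lemma Bop_diff: "Bop n l0 l1 l2 (F - G) z = Bop n l0 l1 l2 F z - Bop n l0 l1 l2 G z"
  by (simp add: Bop_def pderiv_diff diff_divide_distrib algebra_simps)

lemma Bop_smult: "Bop n l0 l1 l2 (smult s F) z = s * Bop n l0 l1 l2 F z"
  by (simp add: Bop_eq_diff2_functional diff2_functional_smult)

lemma poly_scale: "poly (scale F c) y = poly F (of_real c * y)"
  by (simp add: scale_def poly_pcompose mult.commute)

lemma scale_scale: "scale (scale F a) b = scale F (a * b)"
  by (simp add: scale_def pcompose_assoc[symmetric] pcompose_pCons)

lemma scale_smult: "scale (smult a F) c = smult a (scale F c)"
  by (simp add: scale_def pcompose_smult)

lemma Bop_linear_power:
  assumes "z \<noteq> w"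
  shows "Bop n l0 l1 l2 ([:-w, 1:] ^ n) z = (z - w) ^ n * Bop_U n l0 l1 l2 (of_nat n * z / (2 * (z - w)))"
proof -
  define d where "d = z - w"
  define c where "c = of_nat n * z / 2"
  have d: "d \<noteq> 0"
    using assms by (simp add: d_def)
  have v: "of_nat n * z / (2 * d) = c / d"
    by (simp add: c_def)
  have U_expand: "d ^ n * Bop_U n l0 l1 l2 (c / d)
      = l0 * d ^ n + of_nat n * l1 * (d ^ n * (c / d)) + of_nat n * (of_nat n - 1) / 2 * l2 * (d ^ n * (c / d)\<^sup>2)"
    by (simp add: Bop_U_def algebra_simps)
  have B_expand: "Bop n l0 l1 l2 ([:-w, 1:] ^ n) z
      = l0 * d ^ n + l1 * c * of_nat n * d ^ (n - 1) + l2 * c\<^sup>2 / 2 * (of_nat n * of_nat (n - 1)) * d ^ (n - 1 - 1)"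
    by (simp add: Bop_def pderiv_linear_power pderiv_smult c_def d_def algebra_simps)
  consider "n = 0" | "n = 1" | k where "n = Suc (Suc k)"
    by (metis One_nat_def not0_implies_Suc)
  then show ?thesis
    unfolding v d_def[symmetric] U_expand B_expand
    by cases (simp_all add: d field_simps power2_eq_square)
qed

lemma Bop_linear_power_nonzero:
  assumes "1 \<le> n" and U: "\<forall>w. Bop_U n l0 l1 l2 w = 0 \<longrightarrow> cmod w \<le> cmod (w - of_nat n / 2)"
    and "cmod w < cmod z"
  shows "Bop n l0 l1 l2 ([:-w, 1:] ^ n) z \<noteq> 0"
proof -
  have zw: "z - w \<noteq> 0"
    using assms(3) by auto
  define v where "v = of_nat n * z / (2 * (z - w))"
  have "v - of_nat n / 2 = of_nat n * w / (2 * (z - w))"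
    using zw by (simp add: v_def field_simps)
  then have "cmod (v - of_nat n / 2) < cmod v"
    using assms(1,3) zw by (simp add: v_def norm_divide norm_mult divide_strict_right_mono)
  then have "Bop_U n l0 l1 l2 v \<noteq> 0"
    using U by force
  then show ?thesis
    using zw by (simp add: Bop_linear_power v_def)
qed

theorem Bop_nonzero_of_roots_inside:
  fixes H :: "complex poly"
  assumes "1 \<le> n" and U: "\<forall>w. Bop_U n l0 l1 l2 w = 0 \<longrightarrow> cmod w \<le> cmod (w - of_nat n / 2)"
    and "degree H = n" and "\<forall>w. cmod z \<le> cmod w \<longrightarrow> poly H w \<noteq> 0"
  shows "Bop n l0 l1 l2 H z \<noteq> 0"
proof -
  define M where "M = proots H"
  define \<rho> where "\<rho> = Max (cmod ` set_mset M)"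
  have "H \<noteq> 0" "size M = n"
    using assms(1,3) by (auto simp: M_def size_proots_complex)
  then have M: "M \<noteq> {#}" "\<forall>x\<in>#M. cmod x < cmod z"
    using assms(1,4) by (auto simp: M_def not_le)
  then have \<rho>: "0 \<le> \<rho>" "\<rho> < cmod z" "\<forall>x\<in>#M. cmod x \<le> \<rho>"
    by (auto simp: \<rho>_def Max_ge_iff Max_less_iff)
  have "poly (diff2_symbol z (size M) l0 (l1 * (of_nat n * z / 2)) (l2 * (of_nat n * z / 2)\<^sup>2 / 2)) u \<noteq> 0"
    if "cmod u \<le> \<rho>" for u
    using Bop_linear_power_nonzero[OF assms(1) U, of u z] that \<rho>(2) \<open>size M = n\<close>
    by (simp add: poly_diff2_symbol Bop_eq_diff2_functional)
  then have "diff2_functional z l0 (l1 * (of_nat n * z / 2)) (l2 * (of_nat n * z / 2)\<^sup>2 / 2)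
      (\<Prod>x\<in>#M. [:-x, 1:]) \<noteq> 0"
    using diff2_functional_prod_nonzero \<rho>(1,3) by blast
  moreover have "H = smult (lead_coeff H) (\<Prod>x\<in>#M. [:-x, 1:])"
    unfolding M_def by (rule complex_poly_decompose_multiset[symmetric])
  ultimately show ?thesis
    using \<open>H \<noteq> 0\<close> by (metis Bop_eq_diff2_functional Bop_smult leading_coeff_0_iff mult_eq_0_iff)
qed

section \<open>Dilations\<close>

lemma norm_poly_factored:
  fixes p :: "complex poly"
  obtains root where "\<And>i. i < degree p \<Longrightarrow> poly p (root i) = 0"
    and "\<And>y. cmod (poly p y) = cmod (lead_coeff p) * (\<Prod>i<degree p. cmod (y - root i))"
proof -
  obtain root where p: "smult (lead_coeff p) (\<Prod>i<degree p. [:-root i, 1:]) = p"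
    using complex_poly_decompose' by blast
  have val: "poly p y = lead_coeff p * (\<Prod>i<degree p. y - root i)" for y
    by (subst p[symmetric]) (simp add: poly_prod)
  show ?thesis
  proof
    show "poly p (root i) = 0" if "i < degree p" for i
      using that by (simp add: val) blast
    show "cmod (poly p y) = cmod (lead_coeff p) * (\<Prod>i<degree p. cmod (y - root i))" for y
      by (simp add: val norm_mult prod_norm)
  qed
qed

text \<open>With \<open>u = cmod x\<close>, \<open>v = cmod y\<close> and \<open>p = Re (x * cnj y)\<close>, the quantity below times
  \<open>R - r\<close> is \<open>((r + k) * cmod (R * y - x))\<^sup>2 - ((R + k) * cmod (r * y - x))\<^sup>2\<close>.\<close>
lemma dilation_discriminant_pos:
  fixes u v p k R r :: real
  assumes "0 < k" "r < R" "k \<le> r" "0 \<le> u" "u < k" "1 \<le> v" "- (u * v) \<le> p"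
  shows "0 < k * v\<^sup>2 * (2 * R * r + k * R + k * r) + 2 * (R * r - k\<^sup>2) * p - (R + r + 2 * k) * u\<^sup>2"
proof -
  define A where "A = 2 * R * r + k * R + k * r"
  define B where "B = R * r - k\<^sup>2"
  define C where "C = R + r + 2 * k"
  have "0 \<le> R * r" "0 \<le> k * R" "0 \<le> k * r"
    using assms by (auto intro!: mult_nonneg_nonneg)
  then have B: "0 \<le> B" "B \<le> A"
    using assms mult_mono[of k R k r] zero_le_square[of k]
    unfolding A_def B_def power2_eq_square by linarith+
  have "v\<^sup>2 * A - 2 * B * v - C * k = (v - 1) * (A * (v - 1) + 2 * (A - B))"
    unfolding A_def B_def C_def by (simp add: power2_eq_square algebra_simps)
  also have "\<dots> \<ge> 0"
    using assms(6) B by simp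
  finally have "0 \<le> k * (v\<^sup>2 * A - 2 * B * v - C * k)"
    using assms(1) by simp
  then have "0 \<le> k * v\<^sup>2 * A - 2 * B * k * v - C * k\<^sup>2"
    by (simp add: algebra_simps power2_eq_square)
  moreover have "- (B * (u * v)) \<le> B * p"
    using B(1) assms(7) mult_left_mono by fastforce
  moreover have "B * (u * v) \<le> B * (k * v)"
    using B(1) assms(5,6) by (intro mult_left_mono mult_right_mono) auto
  moreover have "C * u\<^sup>2 < C * k\<^sup>2"
    using assms by (simp add: C_def power_strict_mono)
  ultimately show ?thesis
    unfolding A_def[symmetric] B_def[symmetric] C_def[symmetric] by (simp add: algebra_simps)
qed

lemma dilation_factor_gt:
  fixes x y :: complex and R r k :: real
  assumes "k > 0" "R > r" "r \<ge> k" "cmod x < k" "cmod y \<ge> 1"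
  shows "(R + k) * cmod (of_real r * y - x) < (r + k) * cmod (of_real R * y - x)"
proof -
  define u where "u = cmod x"
  define v where "v = cmod y"
  define p where "p = Re (x * cnj y)"
  have sq: "(cmod (of_real t * y - x))\<^sup>2 = t\<^sup>2 * v\<^sup>2 - 2 * t * p + u\<^sup>2" for t
    unfolding cmod_power2 u_def v_def p_def by (simp add: power2_eq_square algebra_simps)
  have "- (u * v) \<le> p"
    using abs_Re_le_cmod[of "x * cnj y"] by (simp add: p_def u_def v_def norm_mult)
  then have "0 < (R - r) * (k * v\<^sup>2 * (2 * R * r + k * R + k * r) + 2 * (R * r - k\<^sup>2) * p
      - (R + r + 2 * k) * u\<^sup>2)"
    using assms dilation_discriminant_pos[of k r R u v p] by (simp add: u_def v_def)
  also have "\<dots> = ((r + k) * cmod (of_real R * y - x))\<^sup>2 - ((R + k) * cmod (of_real r * y - x))\<^sup>2"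
    unfolding power_mult_distrib sq by (simp add: power2_eq_square algebra_simps)
  finally have "((R + k) * cmod (of_real r * y - x))\<^sup>2 < ((r + k) * cmod (of_real R * y - x))\<^sup>2"
    by simp
  then show ?thesis
    by (rule power_less_imp_less_base) (use assms(1,3) in simp)
qed

lemma norm_poly_dilate_gt:
  fixes F :: "complex poly" and R r k :: real
  assumes "0 < degree F" "\<forall>w. k \<le> cmod w \<longrightarrow> poly F w \<noteq> 0"
    and "k > 0" "R > r" "r \<ge> k" "cmod y \<ge> 1"
  shows "(R + k) ^ degree F * cmod (poly F (of_real r * y))
    < (r + k) ^ degree F * cmod (poly F (of_real R * y))"
proof -
  obtain root where root: "\<And>i. i < degree F \<Longrightarrow> poly F (root i) = 0"
    and val: "\<And>y. cmod (poly F y) = cmod (lead_coeff F) * (\<Prod>i<degree F. cmod (y - root i))"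
    using norm_poly_factored by blast
  have gt: "(R + k) * cmod (of_real r * y - root i) < (r + k) * cmod (of_real R * y - root i)"
    if "i < degree F" for i
    using assms(2) root[OF that] assms(3-6) by (intro dilation_factor_gt) (auto simp: not_le[symmetric])
  have "(\<Prod>i<degree F. (R + k) * cmod (of_real r * y - root i))
      < (\<Prod>i<degree F. (r + k) * cmod (of_real R * y - root i))"
    using assms(1,3-5) by (intro prod_mono_strict[of 0]) (auto intro: gt less_imp_le order.strict_trans1[OF _ gt])
  then have "(R + k) ^ degree F * (\<Prod>i<degree F. cmod (of_real r * y - root i))
      < (r + k) ^ degree F * (\<Prod>i<degree F. cmod (of_real R * y - root i))"
    by (simp only: prod.distrib prod_constant card_lessThan)
  moreover have "0 < cmod (lead_coeff F)"
    using assms(1) by auto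
  ultimately show ?thesis
    unfolding val by (metis mult_strict_left_mono mult.left_commute)
qed

lemma degree_dilation_comb:
  fixes F :: "complex poly" and R r :: real
  assumes "degree F = n" "0 < r" "r < R" "cmod \<Phi> < (R / r) ^ n"
  shows "degree (scale F R + smult \<Phi> (scale F r)) = n"
proof -
  have "cmod (\<Phi> * of_real r ^ n) < R ^ n"
    using assms(2,4) by (simp add: norm_mult norm_power field_simps power_divide)
  then have "of_real R ^ n + \<Phi> * of_real r ^ n \<noteq> 0"
    using assms(2,3) by (auto simp: add_eq_0_iff norm_power)
  moreover have "coeff (scale F R + smult \<Phi> (scale F r)) n
      = lead_coeff F * (of_real R ^ n + \<Phi> * of_real r ^ n)"
    using assms(1) by (simp add: scale_def coeff_pcompose_linear algebra_simps)
  ultimately have "F \<noteq> 0 \<Longrightarrow> n \<le> degree (scale F R + smult \<Phi> (scale F r))"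
    by (simp add: le_degree)
  moreover have "degree (scale F c) \<le> n" for c
    using assms(1) by (simp add: scale_def degree_pcompose)
  then have "degree (scale F R + smult \<Phi> (scale F r)) \<le> n"
    by (intro degree_add_le order.trans[OF degree_smult_le])
  ultimately show ?thesis
    using assms(1) by (cases "F = 0") (auto simp: scale_def)
qed

theorem Bop_dilation_comb_nonzero:
  fixes F :: "complex poly" and k R r :: real
  assumes "1 \<le> n" and U: "\<forall>w. Bop_U n l0 l1 l2 w = 0 \<longrightarrow> cmod w \<le> cmod (w - of_nat n / 2)"
    and "k > 0" "R > r" "r \<ge> k" "cmod \<Phi> \<le> ((R + k) / (k + r)) ^ n"
    and "degree F = n" "\<forall>w. k \<le> cmod w \<longrightarrow> poly F w \<noteq> 0" "1 \<le> cmod z"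
  shows "Bop n l0 l1 l2 (scale F R) z + \<Phi> * Bop n l0 l1 l2 (scale F r) z \<noteq> 0"
proof -
  define H where "H = scale F R + smult \<Phi> (scale F r)"
  have "poly H y \<noteq> 0" if "1 \<le> cmod y" for y
  proof -
    have "((R + k) / (k + r)) ^ n * cmod (poly F (of_real r * y)) < cmod (poly F (of_real R * y))"
      using norm_poly_dilate_gt[OF _ assms(8,3-5) that] assms(1,3,5,7)
      by (simp add: power_divide field_simps add.commute)
    then have "cmod (\<Phi> * poly F (of_real r * y)) < cmod (poly F (of_real R * y))"
      using assms(6) by (simp add: norm_mult) (meson mult_right_mono norm_ge_zero le_less_trans)
    then show ?thesis
      unfolding H_def poly_add poly_smult poly_scale by (metis add_eq_0_iff norm_minus_cancel less_irrefl)
  qed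
  moreover have "degree H = n"
  proof -
    have "(R + k) / (k + r) < R / r"
      using assms(3-5) by (simp add: field_simps)
    then have "((R + k) / (k + r)) ^ n < (R / r) ^ n"
      using assms(1,3-5) by (intro power_strict_mono) auto
    then have "cmod \<Phi> < (R / r) ^ n"
      using assms(6) by linarith
    then show ?thesis
      unfolding H_def using assms by (intro degree_dilation_comb) auto
  qed
  ultimately have "Bop n l0 l1 l2 H z \<noteq> 0"
    using Bop_nonzero_of_roots_inside[OF assms(1) U] assms(9) by force
  then show ?thesis
    by (simp add: H_def Bop_add Bop_smult)
qed

section \<open>Reflection in the circle of radius k\<close>

lemma coeff_reflQ: "coeff (reflQ n P) j = (if j \<le> n then cnj (coeff P (n - j)) else 0)"
  unfolding reflQ_def coeff_sum coeff_monom by (simp add: sum.delta)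

definition circle_reflect :: "nat \<Rightarrow> real \<Rightarrow> complex poly \<Rightarrow> complex poly" where
  "circle_reflect n k P = smult (of_real (k ^ n)) (scale (reflQ n P) (1 / k\<^sup>2))"

lemma Bop_scale_circle_reflect:
  "Bop n l0 l1 l2 (scale (circle_reflect n k P) c) z = of_real (k ^ n) * Bop n l0 l1 l2 (scale (reflQ n P) (c / k\<^sup>2)) z"
  unfolding circle_reflect_def scale_smult scale_scale Bop_smult by (simp add: field_simps)

lemma poly_circle_reflect:
  assumes "degree P \<le> n" "k > 0" "w \<noteq> 0"
  shows "poly (circle_reflect n k P) w = (w / of_real k) ^ n * cnj (poly P (of_real (k\<^sup>2) / cnj w))"
proof -
  have "poly (circle_reflect n k P) w = of_real (k ^ n) * poly (reflQ n P) (w / of_real (k\<^sup>2))"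
    by (simp add: circle_reflect_def poly_scale)
  also have "\<dots> = of_real (k ^ n) * ((w / of_real (k\<^sup>2)) ^ n * cnj (poly P (of_real (k\<^sup>2) / cnj w)))"
    using assms by (simp add: reflQ_eval complex_cnj_divide)
  also have "\<dots> = (w / of_real k) ^ n * cnj (poly P (of_real (k\<^sup>2) / cnj w))"
    using assms(2) by (simp add: power_divide power2_eq_square power_mult_distrib field_simps)
  finally show ?thesis .
qed

lemma circle_reflect_nonzero:
  assumes "degree P \<le> n" "k > 0" "\<forall>w. cmod w \<le> k \<longrightarrow> poly P w \<noteq> 0" "k \<le> cmod w"
  shows "poly (circle_reflect n k P) w \<noteq> 0"
proof -
  have "cmod (of_real (k\<^sup>2) / cnj w) = k\<^sup>2 / cmod w"
    by (simp add: norm_divide norm_power)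
  also have "\<dots> \<le> k"
    using assms(2,4) by (simp add: power2_eq_square divide_le_eq mult_left_mono)
  finally have "poly P (of_real (k\<^sup>2) / cnj w) \<noteq> 0"
    using assms(3) by blast
  moreover have "w \<noteq> 0"
    using assms(2,4) by auto
  ultimately show ?thesis
    using poly_circle_reflect[OF assms(1,2)] assms(2) by simp
qed

lemma norm_sub_le_circle_inversion:
  fixes w x :: complex
  assumes "0 < k" "k \<le> cmod w" "k \<le> cmod x"
  shows "k * cmod (w - x) \<le> cmod w * cmod (of_real (k\<^sup>2) / cnj w - x)"
proof -
  have "cnj w * (of_real (k\<^sup>2) / cnj w - x) = cnj (of_real (k\<^sup>2) - w * cnj x)"
    using assms(1,2) by (auto simp: field_simps)
  then have "cmod w * cmod (of_real (k\<^sup>2) / cnj w - x) = cmod (of_real (k\<^sup>2) - w * cnj x)"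
    by (metis complex_mod_cnj norm_mult)
  moreover have "(cmod (of_real (k\<^sup>2) - w * cnj x))\<^sup>2 - (k * cmod (w - x))\<^sup>2
      = ((cmod x)\<^sup>2 - k\<^sup>2) * ((cmod w)\<^sup>2 - k\<^sup>2)"
    unfolding power_mult_distrib cmod_power2 by (simp add: power2_eq_square algebra_simps)
  moreover have "0 \<le> ((cmod x)\<^sup>2 - k\<^sup>2) * ((cmod w)\<^sup>2 - k\<^sup>2)"
    using assms by (intro mult_nonneg_nonneg) (auto simp: power_mono)
  ultimately have "(k * cmod (w - x))\<^sup>2 \<le> (cmod w * cmod (of_real (k\<^sup>2) / cnj w - x))\<^sup>2"
    by (metis diff_ge_0_iff_ge)
  then show ?thesis
    by (rule power2_le_imp_le) simp
qed

lemma norm_poly_le_circle_reflect: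
  assumes "degree P \<le> n" "k > 0" "\<forall>w. cmod w \<le> k \<longrightarrow> poly P w \<noteq> 0" "k \<le> cmod w"
  shows "cmod (poly P w) \<le> cmod (poly (circle_reflect n k P) w)"
proof -
  have "w \<noteq> 0"
    using assms(2,4) by auto
  obtain root where root: "\<And>i. i < degree P \<Longrightarrow> poly P (root i) = 0"
    and val: "\<And>y. cmod (poly P y) = cmod (lead_coeff P) * (\<Prod>i<degree P. cmod (y - root i))"
    using norm_poly_factored by blast
  let ?m = "degree P" and ?w' = "of_real (k\<^sup>2) / cnj w"
  have roots: "k \<le> cmod (root i)" if "i < ?m" for i
    using assms(3) root[OF that] by (meson not_le less_imp_le)
  have "(\<Prod>i<?m. k * cmod (w - root i)) \<le> (\<Prod>i<?m. cmod w * cmod (?w' - root i))"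
    using assms(2,4)
    by (intro prod_mono conjI mult_nonneg_nonneg norm_sub_le_circle_inversion roots) auto
  then have "k ^ ?m * (\<Prod>i<?m. cmod (w - root i)) \<le> cmod w ^ ?m * (\<Prod>i<?m. cmod (?w' - root i))"
    by (simp only: prod.distrib prod_constant card_lessThan)
  then have "k ^ ?m * cmod (poly P w) \<le> cmod w ^ ?m * cmod (poly P ?w')"
    unfolding val by (metis mult_left_mono norm_ge_zero mult.left_commute)
  then have "cmod (poly P w) \<le> (cmod w / k) ^ ?m * cmod (poly P ?w')"
    using assms(2) by (simp add: power_divide field_simps)
  also have "\<dots> \<le> (cmod w / k) ^ n * cmod (poly P ?w')"
    using assms(1,2,4) by (intro mult_right_mono power_increasing) auto
  also have "\<dots> = cmod (poly (circle_reflect n k P) w)"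
    using assms(2) poly_circle_reflect[OF assms(1,2) \<open>w \<noteq> 0\<close>] by (simp add: norm_mult norm_power norm_divide)
  finally show ?thesis .
qed

lemma coeff_circle_reflect:
  assumes "k > 0"
  shows "coeff (circle_reflect n k P) n = cnj (coeff P 0) / of_real (k ^ n)"
  using assms by (simp add: circle_reflect_def scale_def coeff_pcompose_linear coeff_reflQ
      power_divide power2_eq_square power_mult_distrib field_simps)

lemma degree_circle_reflect:
  assumes "k > 0" "coeff P 0 \<noteq> 0"
  shows "degree (circle_reflect n k P) = n"
proof (rule antisym)
  have "degree (reflQ n P) \<le> n"
    by (rule degree_le) (simp add: coeff_reflQ)
  then show "degree (circle_reflect n k P) \<le> n"
    by (simp add: circle_reflect_def scale_def degree_pcompose order.trans[OF degree_smult_le])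
  show "n \<le> degree (circle_reflect n k P)"
    using assms by (intro le_degree) (simp add: coeff_circle_reflect)
qed

lemma norm_coeff_lt_const_coeff:
  fixes P :: "complex poly"
  assumes "1 \<le> n" "degree P \<le> n" "k > 0" "\<forall>w. cmod w \<le> k \<longrightarrow> poly P w \<noteq> 0"
  shows "cmod (coeff P n) * k ^ n < cmod (coeff P 0)"
proof (cases "degree P = n")
  case True
  obtain root where root: "\<And>i. i < degree P \<Longrightarrow> poly P (root i) = 0"
    and val: "\<And>y. cmod (poly P y) = cmod (lead_coeff P) * (\<Prod>i<degree P. cmod (y - root i))"
    using norm_poly_factored by blast
  have gt: "k < cmod (root i)" if "i < degree P" for i
    using assms(4) root[OF that] by (meson not_le)
  then have "(\<Prod>i<n. k) < (\<Prod>i<n. cmod (0 - root i))"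
    using assms(1,3) True by (intro prod_mono_strict[of 0]) (auto intro: less_imp_le gt dest: gt)
  moreover have "0 < cmod (lead_coeff P)"
    using assms(1) True by auto
  ultimately show ?thesis
    using True val[of 0] by (simp add: poly_0_coeff_0 mult.commute)
next
  case False
  then show ?thesis
    using assms(2-4) by (simp add: coeff_eq_0 poly_0_coeff_0[symmetric])
qed

lemma norm_Phi_le:
  assumes "cmod \<alpha> \<le> 1" "cmod \<beta> \<le> 1" "0 < k + r" "r \<le> R"
  shows "cmod (Phi n k R r \<alpha> \<beta>) \<le> ((R + k) / (k + r)) ^ n"
proof -
  define M where "M = ((R + k) / (k + r)) ^ n"
  have "1 \<le> M"
    using assms(3,4) by (simp add: M_def one_le_power)
  then have nonneg: "0 \<le> M - cmod \<alpha>"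
    using assms(1) by simp
  have "cmod (\<beta> * of_real (M - cmod \<alpha>)) = cmod \<beta> * (M - cmod \<alpha>)"
    by (simp only: norm_mult norm_of_real abs_of_nonneg[OF nonneg])
  then have "cmod (Phi n k R r \<alpha> \<beta>) \<le> cmod \<beta> * (M - cmod \<alpha>) + cmod \<alpha>"
    unfolding Phi_def M_def[symmetric] by (metis norm_triangle_ineq4)
  also have "\<dots> \<le> M"
    using assms(2) nonneg mult_left_le_one_le[of "M - cmod \<alpha>" "cmod \<beta>"] by simp
  finally show ?thesis
    by (simp add: M_def)
qed

lemma degree_sub_circle_reflect:
  fixes P :: "complex poly"
  assumes "1 \<le> n" "k > 0" "degree P \<le> n" "\<forall>w. cmod w \<le> k \<longrightarrow> poly P w \<noteq> 0" "1 < cmod \<mu>"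
  shows "degree (P - smult \<mu> (circle_reflect n k P)) = n"
proof (rule antisym)
  have "coeff P 0 \<noteq> 0"
    using assms(2,4) by (metis poly_0_coeff_0 norm_zero less_imp_le)
  then have "degree (circle_reflect n k P) = n"
    using assms(2) by (simp add: degree_circle_reflect)
  then show "degree (P - smult \<mu> (circle_reflect n k P)) \<le> n"
    using assms(3) by (intro degree_diff_le order.trans[OF degree_smult_le]) auto
  have "cmod (coeff P n) * k ^ n < cmod (coeff P 0)"
    by (rule norm_coeff_lt_const_coeff[OF assms(1,3,2,4)])
  also have "\<dots> < cmod \<mu> * cmod (coeff P 0)"
    using assms(5) \<open>coeff P 0 \<noteq> 0\<close> by simp
  finally have "cmod (coeff P n) < cmod (\<mu> * coeff (circle_reflect n k P) n)"
    using assms(2) by (simp add: coeff_circle_reflect norm_mult norm_divide norm_power field_simps)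
  then show "n \<le> degree (P - smult \<mu> (circle_reflect n k P))"
    by (intro le_degree) auto
qed

lemma sub_circle_reflect_nonzero:
  fixes P :: "complex poly"
  assumes "degree P \<le> n" "k > 0" "\<forall>w. cmod w \<le> k \<longrightarrow> poly P w \<noteq> 0" "1 < cmod \<mu>" "k \<le> cmod w"
  shows "poly (P - smult \<mu> (circle_reflect n k P)) w \<noteq> 0"
proof -
  have "cmod (poly (circle_reflect n k P) w) < cmod \<mu> * cmod (poly (circle_reflect n k P) w)"
    using circle_reflect_nonzero[OF assms(1-3,5)] assms(4) by simp
  then have "cmod (poly P w) < cmod (\<mu> * poly (circle_reflect n k P) w)"
    using norm_poly_le_circle_reflect[OF assms(1-3,5)] by (simp add: norm_mult)
  then show ?thesis
    by auto
qed

theorem Bop_comb_le_circle_reflect: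
  fixes P :: "complex poly" and k R r :: real
  assumes "1 \<le> n" "k > 0" and U: "\<forall>w. Bop_U n l0 l1 l2 w = 0 \<longrightarrow> cmod w \<le> cmod (w - of_nat n / 2)"
    and "degree P \<le> n" "\<forall>w. cmod w \<le> k \<longrightarrow> poly P w \<noteq> 0"
    and "R > r" "r \<ge> k" "cmod \<Phi> \<le> ((R + k) / (k + r)) ^ n" "cmod z \<ge> 1"
  shows "cmod (Bop n l0 l1 l2 (scale P R) z + \<Phi> * Bop n l0 l1 l2 (scale P r) z)
    \<le> cmod (Bop n l0 l1 l2 (scale (circle_reflect n k P) R) z
             + \<Phi> * Bop n l0 l1 l2 (scale (circle_reflect n k P) r) z)"
proof (rule ccontr)
  define G where "G = circle_reflect n k P"
  define X where "X = Bop n l0 l1 l2 (scale P R) z + \<Phi> * Bop n l0 l1 l2 (scale P r) z"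
  define Y where "Y = Bop n l0 l1 l2 (scale G R) z + \<Phi> * Bop n l0 l1 l2 (scale G r) z"
  assume "\<not> cmod X \<le> cmod Y"
  have "coeff P 0 \<noteq> 0"
    using assms(2,5) by (metis poly_0_coeff_0 norm_zero less_imp_le)
  then have "degree G = n"
    using assms(2) by (simp add: G_def degree_circle_reflect)
  moreover have "poly G w \<noteq> 0" if "k \<le> cmod w" for w
    using circle_reflect_nonzero assms(2,4,5) that by (simp add: G_def)
  ultimately have "Y \<noteq> 0"
    unfolding Y_def using Bop_dilation_comb_nonzero[OF assms(1) U assms(2,6,7,8)] assms(9) by blast
  define \<mu> where "\<mu> = X / Y"
  have "1 < cmod \<mu>"
    using \<open>Y \<noteq> 0\<close> \<open>\<not> cmod X \<le> cmod Y\<close> by (simp add: \<mu>_def norm_divide)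
  then have "degree (P - smult \<mu> G) = n" "\<forall>w. k \<le> cmod w \<longrightarrow> poly (P - smult \<mu> G) w \<noteq> 0"
    unfolding G_def using assms(1,2,4,5) degree_sub_circle_reflect sub_circle_reflect_nonzero by auto
  then have "Bop n l0 l1 l2 (scale (P - smult \<mu> G) R) z + \<Phi> * Bop n l0 l1 l2 (scale (P - smult \<mu> G) r) z \<noteq> 0"
    using Bop_dilation_comb_nonzero[OF assms(1) U assms(2,6,7,8)] assms(9) by blast
  moreover have "Bop n l0 l1 l2 (scale (P - smult \<mu> G) R) z + \<Phi> * Bop n l0 l1 l2 (scale (P - smult \<mu> G) r) z
      = X - \<mu> * Y"
    by (simp add: X_def Y_def scale_def pcompose_diff pcompose_smult Bop_diff Bop_smult algebra_simps)
  ultimately show False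
    using \<open>Y \<noteq> 0\<close> by (simp add: \<mu>_def)
qed

lemma Bop_scale:
  "Bop n l0 l1 l2 (scale Q c) z = l0 * poly Q (of_real c * z)
     + l1 * (of_nat n * z / 2) * (of_real c * poly (pderiv Q) (of_real c * z))
     + l2 * (of_nat n * z / 2)\<^sup>2 * ((of_real c)\<^sup>2 * poly (pderiv (pderiv Q)) (of_real c * z)) / 2"
proof -
  have d: "pderiv [:0, of_real c:] = [:of_real c:]"
    by (simp add: pderiv_pCons)
  have "pderiv (scale Q c) = smult (of_real c) (scale (pderiv Q) c)" for Q
    unfolding scale_def pderiv_pcompose d by simp
  then show ?thesis
    by (simp add: Bop_def poly_scale pderiv_smult power2_eq_square algebra_simps)
qed

lemma tendsto_Bop_scale [tendsto_intros]:
  "(f \<longlongrightarrow> c) F \<Longrightarrow> ((\<lambda>x. Bop n l0 l1 l2 (scale Q (f x)) z) \<longlongrightarrow> Bop n l0 l1 l2 (scale Q c) z) F"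
  unfolding Bop_scale by (intro tendsto_intros) auto

lemma Bop_comb_le_reflQ:
  fixes n :: nat and k R r :: real and l0 l1 l2 \<alpha> \<beta> z :: complex and P :: "complex poly"
  assumes "1 \<le> n" and "k > 0"
    and U: "\<forall>w. Bop_U n l0 l1 l2 w = 0 \<longrightarrow> cmod w \<le> cmod (w - of_nat n / 2)"
    and "degree P \<le> n" and "\<forall>w. cmod w \<le> k \<longrightarrow> poly P w \<noteq> 0"
    and "cmod \<alpha> \<le> 1" and "cmod \<beta> \<le> 1" and "R > r" and "r \<ge> k" and "cmod z \<ge> 1"
  shows "cmod (Bop n l0 l1 l2 (scale P R) z + Phi n k R r \<alpha> \<beta> * Bop n l0 l1 l2 (scale P r) z)
     \<le> k ^ n * cmod (Bop n l0 l1 l2 (scale (reflQ n P) (R / k\<^sup>2)) z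
                     + Phi n k R r \<alpha> \<beta> * Bop n l0 l1 l2 (scale (reflQ n P) (r / k\<^sup>2)) z)"
proof -
  have "cmod (Phi n k R r \<alpha> \<beta>) \<le> ((R + k) / (k + r)) ^ n"
    using assms(2,6-9) by (intro norm_Phi_le) auto
  then have "cmod (Bop n l0 l1 l2 (scale P R) z + Phi n k R r \<alpha> \<beta> * Bop n l0 l1 l2 (scale P r) z)
    \<le> cmod (Bop n l0 l1 l2 (scale (circle_reflect n k P) R) z
        + Phi n k R r \<alpha> \<beta> * Bop n l0 l1 l2 (scale (circle_reflect n k P) r) z)"
    by (rule Bop_comb_le_circle_reflect[OF assms(1,2) U assms(4,5,8,9) _ assms(10)])
  also have "Bop n l0 l1 l2 (scale (circle_reflect n k P) R) z
      + Phi n k R r \<alpha> \<beta> * Bop n l0 l1 l2 (scale (circle_reflect n k P) r) z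
    = of_real (k ^ n) * (Bop n l0 l1 l2 (scale (reflQ n P) (R / k\<^sup>2)) z
      + Phi n k R r \<alpha> \<beta> * Bop n l0 l1 l2 (scale (reflQ n P) (r / k\<^sup>2)) z)"
    by (simp add: Bop_scale_circle_reflect algebra_simps)
  finally show ?thesis
    using assms(2) by (simp add: norm_mult norm_power)
qed

theorem lemma1p3:
  fixes n :: nat and k R r :: real and l0 l1 l2 \<alpha> \<beta> z :: complex and P :: "complex poly"
  assumes "n \<ge> 1" and "k > 0"
    and U: "\<forall>w. l0 + of_nat n * l1 * w + of_nat n * (of_nat n - 1) / 2 * l2 * w ^ 2 = 0
              \<longrightarrow> cmod w \<le> cmod (w - of_nat n / 2)"
    and "degree P \<le> n"
    and "\<forall>w. cmod w < k \<longrightarrow> poly P w \<noteq> 0"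
    and "cmod \<alpha> \<le> 1" and "cmod \<beta> \<le> 1"
    and "R > r" and "r \<ge> k"
    and "cmod z \<ge> 1"
  shows "cmod (Bop n l0 l1 l2 (scale P R) z + Phi n k R r \<alpha> \<beta> * Bop n l0 l1 l2 (scale P r) z)
     \<le> k ^ n * cmod (Bop n l0 l1 l2 (scale (reflQ n P) (R / k^2)) z
                     + Phi n k R r \<alpha> \<beta> * Bop n l0 l1 l2 (scale (reflQ n P) (r / k^2)) z)"
proof -
  define gap where "gap \<kappa> = \<kappa> ^ n * cmod (Bop n l0 l1 l2 (scale (reflQ n P) (R / \<kappa>\<^sup>2)) z
      + Phi n \<kappa> R r \<alpha> \<beta> * Bop n l0 l1 l2 (scale (reflQ n P) (r / \<kappa>\<^sup>2)) z)
    - cmod (Bop n l0 l1 l2 (scale P R) z + Phi n \<kappa> R r \<alpha> \<beta> * Bop n l0 l1 l2 (scale P r) z)" for \<kappa>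
  have "\<forall>\<^sub>F \<kappa> in at_left k. 0 \<le> gap \<kappa>"
    using eventually_at_left_real[OF \<open>k > 0\<close>]
  proof (rule eventually_mono)
    fix \<kappa> assume "\<kappa> \<in> {0<..<k}"
    then show "0 \<le> gap \<kappa>"
      unfolding gap_def using Bop_comb_le_reflQ[of n \<kappa>] U assms by (force simp: Bop_U_def)
  qed
  moreover have "(gap \<longlongrightarrow> gap k) (at_left k)"
    unfolding gap_def Phi_def using assms(2,9) by (intro tendsto_intros) auto
  ultimately have "0 \<le> gap k"
    by (intro tendsto_lowerbound) auto
  then show ?thesis
    by (simp add: gap_def)
qed

end
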